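(* For every positive integer $x$ there exist square-primes $a,b$ such that $x=a-b$.
   Context: A square-prime (SP-number) is a positive integer of the form $k^2p$ with $k\ge 2$ an integer and $p$ a prime. *)

theory Defs
  imports "HOL-Computational_Algebra.Primes"
begin

definition sp_number :: "nat \<Rightarrow> bool" where
  "sp_number n \<longleftrightarrow> (\<exists>k p. k \<ge> 2 \<and> prime p \<and> n = k^2 * p)"

end

theory Submission
  imports Defs "HOL-Computational_Algebra.Squarefree" "HOL-Analysis.Kronecker_Approximation_Theorem"
begin

text \<open>
  Multiplying by a square preserves square-primes, so by the squarefree decomposition it
  suffices to treat squarefree \<open>x\<close>. If \<open>x = p y\<close> with \<open>p\<close> prime and \<open>y = 2t + 1 \<ge> 5\<close>, then
  \<open>x = (t + 1)\<^sup>2 p - t\<^sup>2 p\<close>, and apart from \<open>1\<close>, \<open>6\<close> and the primes every squarefree number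
  has this shape. An odd prime \<open>p\<close> is handled by a solution of Pell's equation
  \<open>u\<^sup>2 - 2p v\<^sup>2 = 1\<close> with \<open>v \<noteq> 0\<close>, which gives \<open>p = u\<^sup>2 p - (p v)\<^sup>2 2\<close>.
\<close>

lemma sqrt_nonsquare_irrational:
  fixes D :: nat
  assumes "\<nexists>k. D = k^2"
  shows "sqrt (real D) \<notin> \<rat>"
proof
  assume "sqrt (real D) \<in> \<rat>"
  then obtain m n :: nat where n: "n \<noteq> 0" and mn: "\<bar>sqrt (real D)\<bar> = m / n" and "coprime m n"
    by (rule Rats_abs_nat_div_natE)
  have "real m = sqrt (real D) * real n" using n mn by (simp add: field_simps)
  then have "real (m^2) = real (D * n^2)" by (simp add: power_mult_distrib)
  then have eq: "m^2 = D * n^2" by (simp only: of_nat_eq_iff)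
  have "coprime (m^2) (n^2)" using \<open>coprime m n\<close> by simp
  moreover have "n^2 dvd m^2" using eq by simp
  ultimately have "n^2 = 1" by (simp add: coprime_absorb_right)
  then show False using assms eq by auto
qed

lemma sqrt_nat_le: "sqrt (real D) \<le> real D"
proof (cases "D = 0")
  case False
  then have "real D \<le> real D ^ 2" by (simp add: power2_eq_square)
  then show ?thesis by (intro real_le_lsqrt) auto
qed simp

lemma approx_set_sqrt_norm_bound:
  fixes h k :: int and D :: nat
  assumes "(h, k) \<in> approx_set (sqrt (real D))"
  shows "\<bar>h^2 - int D * k^2\<bar> \<le> 2 * int D + 1"
proof -
  define \<theta> where "\<theta> = sqrt (real D)"
  define e where "e = k * \<theta> - h"
  have k: "k > 0" and approx: "\<bar>\<theta> - h / k\<bar> < 1 / k^2"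
    using assms by (auto simp: approx_set_def \<theta>_def)
  have \<theta>: "\<theta> \<ge> 0" "\<theta>^2 = D" "\<theta> \<le> D"
    using sqrt_nat_le by (simp_all add: \<theta>_def)
  have "e = k * (\<theta> - h / k)" using k by (simp add: e_def field_simps)
  then have "\<bar>e\<bar> = k * \<bar>\<theta> - h / k\<bar>" using k by (simp add: abs_mult)
  also have "\<dots> < k * (1 / k^2)"
    using approx k by (intro mult_strict_left_mono) auto
  finally have e: "\<bar>e\<bar> < 1 / k" using k by (simp add: power2_eq_square)
  also have "\<dots> \<le> 1" using k by simp
  finally have e1: "\<bar>e\<bar> < 1" .
  have "real_of_int (h^2 - int D * k^2) = - e * (2 * k * \<theta> - e)"
    using \<theta>(2) by (simp add: e_def power2_eq_square algebra_simps)
  moreover have "\<bar>2 * k * \<theta> - e\<bar> \<le> 2 * k * \<theta> + 1"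
    using e1 k \<theta>(1) by (smt (verit) mult_nonneg_nonneg of_int_0_le_iff)
  ultimately have "\<bar>real_of_int (h^2 - int D * k^2)\<bar> \<le> \<bar>e\<bar> * (2 * k * \<theta> + 1)"
    by (simp add: abs_mult mult_left_mono)
  also have "\<dots> \<le> (1 / k) * (2 * k * \<theta> + 1)"
    using e k \<theta>(1) by (intro mult_right_mono) auto
  also have "\<dots> \<le> 2 * \<theta> + 1"
    using k by (simp add: field_simps)
  also have "\<dots> \<le> 2 * real D + 1"
    using \<theta>(3) by simp
  finally show ?thesis by linarith
qed

lemma pell_norm_nonzero:
  fixes x y :: int and D :: nat
  assumes "\<nexists>k. D = k^2" and "y \<noteq> 0"
  shows "x^2 - int D * y^2 \<noteq> 0"
proof
  assume "x^2 - int D * y^2 = 0"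
  then have "real_of_int (x^2) = real_of_int (int D * y^2)" by simp
  then have "real D = (x / y)^2"
    using \<open>y \<noteq> 0\<close> by (simp add: power_divide field_simps)
  then have "sqrt (real D) = \<bar>x / y\<bar>" by simp
  then show False using sqrt_nonsquare_irrational[OF assms(1)] by simp
qed

text \<open>
  The witness is \<open>(x\<^sub>1 + y\<^sub>1\<surd>D)(x\<^sub>2 - y\<^sub>2\<surd>D) / c\<close>: its coordinates are integers by the
  congruences, and its norm is \<open>c\<^sup>2 / c\<^sup>2 = 1\<close>.
\<close>
lemma pell_solution_of_congruent_pair:
  fixes x1 y1 x2 y2 c :: int and D :: nat
  assumes norm1: "x1^2 - int D * y1^2 = c" and norm2: "x2^2 - int D * y2^2 = c" and "c \<noteq> 0"
    and dx: "c dvd x2 - x1" and dy: "c dvd y2 - y1"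
    and "y1 > 0" "y2 > 0" "(x1, y1) \<noteq> (x2, y2)"
  shows "\<exists>u v. v \<noteq> 0 \<and> u^2 - int D * v^2 = 1"
proof -
  have "x1 * x2 - int D * y1 * y2 = c + x1 * (x2 - x1) - int D * y1 * (y2 - y1)"
    using norm1 by (simp add: power2_eq_square algebra_simps)
  then have "c dvd x1 * x2 - int D * y1 * y2" using dx dy by simp
  then obtain u where u: "x1 * x2 - int D * y1 * y2 = c * u" ..
  have "x1 * y2 - x2 * y1 = x1 * (y2 - y1) - y1 * (x2 - x1)"
    by (simp add: algebra_simps)
  then have "c dvd x1 * y2 - x2 * y1" using dx dy by simp
  then obtain v where v: "x1 * y2 - x2 * y1 = c * v" ..
  have "(x1 * x2 - int D * y1 * y2)^2 - int D * (x1 * y2 - x2 * y1)^2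
          = (x1^2 - int D * y1^2) * (x2^2 - int D * y2^2)"
    by (simp add: power2_eq_square algebra_simps)
  then have "c^2 * (u^2 - int D * v^2) = c^2 * 1"
    unfolding u v norm1 norm2 by (simp add: power2_eq_square algebra_simps)
  then have uv: "u^2 - int D * v^2 = 1" using \<open>c \<noteq> 0\<close> by simp
  have "v \<noteq> 0"
  proof
    assume "v = 0"
    then have cross: "x1 * y2 = x2 * y1" using v by simp
    have "c * y2^2 = (x1 * y2)^2 - int D * y1^2 * y2^2"
      by (simp add: norm1[symmetric] power2_eq_square algebra_simps)
    also have "\<dots> = c * y1^2"
      by (simp add: cross norm2[symmetric] power2_eq_square algebra_simps)
    finally have "y2^2 = y1^2" using \<open>c \<noteq> 0\<close> by simp
    then have "y2 = y1" using \<open>y1 > 0\<close> \<open>y2 > 0\<close> by (simp add: power2_eq_iff_nonneg)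
    then show False using cross \<open>y1 > 0\<close> \<open>(x1, y1) \<noteq> (x2, y2)\<close> by simp
  qed
  then show ?thesis using uv by blast
qed

text \<open>
  Dirichlet's approximations to \<open>\<surd>D\<close> are infinitely many and have bounded norm, so two of
  them agree in their norm \<open>c\<close> and in both coordinates modulo \<open>c\<close>.
\<close>
theorem pell_solution_exists:
  fixes D :: nat
  assumes nonsquare: "\<nexists>k. D = k^2"
  shows "\<exists>u v :: int. v \<noteq> 0 \<and> u^2 - int D * v^2 = 1"
proof -
  define S where "S = approx_set (sqrt (real D))"
  define N where "N = (\<lambda>q :: int \<times> int. fst q ^ 2 - int D * snd q ^ 2)"
  define M where "M = 2 * int D + 1"
  define g where "g = (\<lambda>q. (N q, fst q mod N q, snd q mod N q))"
  have pos: "snd q > 0" if "q \<in> S" for q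
    using that by (auto simp: S_def approx_set_def)
  have N_nonzero: "N q \<noteq> 0" if "q \<in> S" for q
    using pell_norm_nonzero[OF nonsquare] pos[OF that] by (simp add: N_def)
  have "g ` S \<subseteq> {-M..M} \<times> {-M..M} \<times> {-M..M}"
  proof (rule image_subsetI)
    fix q assume q: "q \<in> S"
    have N_bound: "\<bar>N q\<bar> \<le> M"
      using approx_set_sqrt_norm_bound[of "fst q" "snd q"] q by (simp add: S_def N_def M_def)
    have "\<bar>a mod N q\<bar> \<le> \<bar>N q\<bar>" for a
      using N_nonzero[OF q] by (smt (verit) neg_mod_bound neg_mod_sign pos_mod_bound pos_mod_sign)
    then have "a mod N q \<in> {-M..M}" for a
      using N_bound by (smt (verit) atLeastAtMost_iff)
    then show "g q \<in> {-M..M} \<times> {-M..M} \<times> {-M..M}"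
      using N_bound by (simp add: g_def abs_le_iff)
  qed
  then have "finite (g ` S)" by (rule finite_subset) auto
  moreover have "infinite S"
    using sqrt_nonsquare_irrational[OF nonsquare] rational_iff_finite_approx_set by (simp add: S_def)
  ultimately have "\<not> inj_on g S" using finite_imageD by blast
  then obtain x1 y1 x2 y2 where q: "(x1, y1) \<in> S" "(x2, y2) \<in> S" "(x1, y1) \<noteq> (x2, y2)"
    and same: "g (x1, y1) = g (x2, y2)"
    unfolding inj_on_def by auto
  have N12: "N (x2, y2) = N (x1, y1)"
    and mods: "x2 mod N (x1, y1) = x1 mod N (x1, y1)" "y2 mod N (x1, y1) = y1 mod N (x1, y1)"
    using same by (auto simp: g_def)
  show ?thesis
  proof (rule pell_solution_of_congruent_pair)
    show "x1^2 - int D * y1^2 = N (x1, y1)" "x2^2 - int D * y2^2 = N (x1, y1)"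
      using N12 by (simp_all add: N_def)
    show "N (x1, y1) dvd x2 - x1" "N (x1, y1) dvd y2 - y1"
      using mods by (simp_all add: mod_eq_dvd_iff)
  qed (use q pos N_nonzero in auto)
qed

definition sp_difference :: "nat \<Rightarrow> bool" where
  "sp_difference x \<longleftrightarrow> (\<exists>a b. sp_number a \<and> sp_number b \<and> int x = int a - int b)"

lemma sp_numberI: "k \<ge> 2 \<Longrightarrow> prime p \<Longrightarrow> sp_number (k^2 * p)"
  unfolding sp_number_def by blast

lemma sp_differenceI: "sp_number a \<Longrightarrow> sp_number b \<Longrightarrow> x + b = a \<Longrightarrow> sp_difference x"
  unfolding sp_difference_def by force

lemma sp_number_mult_square:
  assumes "sp_number a" "c > 0"
  shows "sp_number (c^2 * a)"
proof -
  obtain k p where "k \<ge> 2" "prime p" "a = k^2 * p"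
    using assms(1) by (auto simp: sp_number_def)
  moreover have "c * k \<ge> 1 * 2"
    using \<open>k \<ge> 2\<close> \<open>c > 0\<close> by (intro mult_le_mono) auto
  ultimately show ?thesis
    using sp_numberI[of "c * k" p] by (simp add: power_mult_distrib mult.assoc)
qed

lemma sp_difference_mult_square:
  assumes "sp_difference x" "c > 0"
  shows "sp_difference (c^2 * x)"
proof -
  obtain a b where "sp_number a" "sp_number b" "int x = int a - int b"
    using assms(1) by (auto simp: sp_difference_def)
  then show ?thesis
    using \<open>c > 0\<close> unfolding sp_difference_def
    by (intro exI[of _ "c^2 * a"] exI[of _ "c^2 * b"])
       (simp add: sp_number_mult_square right_diff_distrib)
qed

lemma sp_difference_prime_mult_odd:
  assumes "prime p" "odd y" "y \<ge> 5"
  shows "sp_difference (p * y)"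
proof -
  obtain t where y: "y = 2 * t + 1" using \<open>odd y\<close> by (rule oddE)
  with \<open>y \<ge> 5\<close> have "t \<ge> 2" by simp
  have "p * y + t^2 * p = (t + 1)^2 * p"
    by (simp add: y power2_eq_square algebra_simps)
  then show ?thesis
    using \<open>t \<ge> 2\<close> \<open>prime p\<close> by (intro sp_differenceI[OF sp_numberI sp_numberI]) auto
qed

lemma double_odd_prime_not_square:
  fixes p :: nat
  assumes "prime p" "p \<noteq> 2"
  shows "\<nexists>k. 2 * p = k^2"
proof
  assume "\<exists>k. 2 * p = k^2"
  then obtain k where k: "2 * p = k^2" ..
  then have "even k" by (metis dvd_triv_left even_power)
  then obtain j where "k = 2 * j" ..
  with k have "p = 2 * j^2" by (simp add: power2_eq_square)
  then show False using assms prime_product[of 2 "j^2"] by auto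
qed

lemma sp_difference_prime:
  assumes "prime p"
  shows "sp_difference p"
proof (cases "p = 2")
  case True
  have "sp_number 50" "sp_number 48"
    using sp_numberI[of 5 2] sp_numberI[of 4 3] by simp_all
  then show ?thesis using True by (intro sp_differenceI[of 50 48]) auto
next
  case False
  obtain u v :: int where "v \<noteq> 0" and pell: "u^2 - int (2 * p) * v^2 = 1"
    using pell_solution_exists[OF double_odd_prime_not_square[OF assms False]] by blast
  define k where "k = nat \<bar>u\<bar>"
  define w where "w = nat \<bar>v\<bar>"
  have "w \<ge> 1" using \<open>v \<noteq> 0\<close> by (simp add: w_def)
  have "p \<ge> 3" using prime_ge_2_nat[OF assms] False by simp
  have "int (k^2) = u^2" "int (w^2) = v^2" by (simp_all add: k_def w_def)
  then have "int (k^2) = int (1 + 2 * p * w^2)" using pell by simp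
  then have k2: "k^2 = 1 + 2 * p * w^2" by (simp only: of_nat_eq_iff)
  have "2 * p * w^2 \<ge> 2 * 3 * 1"
    using \<open>p \<ge> 3\<close> \<open>w \<ge> 1\<close> by (intro mult_le_mono) auto
  have "k \<ge> 2"
  proof (rule ccontr)
    assume "\<not> k \<ge> 2"
    then have "k^2 \<le> 1" by (intro power_le_one) auto
    with k2 \<open>2 * p * w^2 \<ge> 2 * 3 * 1\<close> show False by linarith
  qed
  have "p * w \<ge> 3 * 1"
    using \<open>p \<ge> 3\<close> \<open>w \<ge> 1\<close> by (rule mult_le_mono)
  have "p + (p * w)^2 * 2 = k^2 * p"
    unfolding k2 by (simp add: power2_eq_square algebra_simps)
  moreover have "sp_number (k^2 * p)" "sp_number ((p * w)^2 * 2)"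
    using \<open>k \<ge> 2\<close> \<open>p * w \<ge> 3 * 1\<close> assms by (simp_all add: sp_numberI)
  ultimately show ?thesis by (intro sp_differenceI)
qed

lemma squarefree_nat_eq_prime_mult_odd:
  fixes x :: nat
  assumes "squarefree x" "\<not> prime x" "x \<noteq> 1" "x \<noteq> 6"
  obtains p y where "prime p" "odd y" "y \<ge> 5" "x = p * y"
proof -
  have no_square: "\<not> q^2 dvd x" if "q \<ge> 2" for q :: nat
    using squarefreeD[OF assms(1)] that by fastforce
  have odd_ge_5: "y \<ge> 5" if "odd y" "y \<noteq> 1" "y \<noteq> 3" for y :: nat
    using that by presburger
  show ?thesis
  proof (cases "even x")
    case True
    then obtain y where x: "x = 2 * y" ..
    have "odd y"
      using no_square[of 2] x by (auto simp: power2_eq_square)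
    moreover have "y \<noteq> 1" "y \<noteq> 3"
      using assms(2,4) x by auto
    ultimately show ?thesis
      using x odd_ge_5 that[of 2 y] by auto
  next
    case False
    obtain p where p: "prime p" "p dvd x"
      using prime_factor_nat assms(3) by blast
    then obtain y where x: "x = p * y" by blast
    have "odd p" "odd y" "y \<noteq> 1"
      using False x assms(2) p(1) by auto
    show ?thesis
    proof (cases "y = 3")
      case True
      have "p \<noteq> 3"
        using no_square[of 3] x True by (auto simp: power2_eq_square)
      then have "p \<ge> 5"
        using odd_ge_5 \<open>odd p\<close> prime_gt_1_nat[OF p(1)] by fastforce
      then show ?thesis
        using that[of 3 p] x True \<open>odd p\<close> by (simp add: mult.commute)
    next
      case False
      then show ?thesis
        using that[OF p(1) \<open>odd y\<close> _ x] odd_ge_5 \<open>odd y\<close> \<open>y \<noteq> 1\<close> by blast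
    qed
  qed
qed

lemma sp_difference_squarefree:
  assumes "squarefree x"
  shows "sp_difference x"
proof -
  consider "x = 1" | "x = 6" | "prime x" | "\<not> prime x" "x \<noteq> 1" "x \<noteq> 6" by blast
  then show ?thesis
  proof cases
    case 1
    have "sp_number 243" "sp_number 242"
      using sp_numberI[of 9 3] sp_numberI[of 11 2] by simp_all
    then show ?thesis using 1 by (intro sp_differenceI[of 243 242]) auto
  next
    case 2
    have "sp_number 18" "sp_number 12"
      using sp_numberI[of 3 2] sp_numberI[of 2 3] by simp_all
    then show ?thesis using 2 by (intro sp_differenceI[of 18 12]) auto
  next
    case 3
    then show ?thesis by (rule sp_difference_prime)
  next
    case 4
    then obtain p y where "prime p" "odd y" "y \<ge> 5" "x = p * y"
      using squarefree_nat_eq_prime_mult_odd assms by blast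
    then show ?thesis using sp_difference_prime_mult_odd by blast
  qed
qed

theorem lemma3p1:
  fixes x :: nat
  assumes "x > 0"
  shows "\<exists>a b. sp_number a \<and> sp_number b \<and> int x = int a - int b"
proof -
  have x: "x = square_part x ^ 2 * squarefree_part x"
    by (metis mult.commute squarefree_decompose)
  have "square_part x > 0"
    using assms by (metis neq0_conv square_part_0_iff)
  then have "sp_difference x"
    by (subst x) (intro sp_difference_mult_square sp_difference_squarefree squarefree_squarefree_part)
  then show ?thesis by (simp add: sp_difference_def)
qed

end
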